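(* Let $n,m\ge 2$ and consider the LC orbit $\mathcal{O}(K_{n,m})$ of the complete bipartite graph, with isomorphic graphs identified. If $n\ne m$, the number of isomorphism classes of graphs in $\mathcal{O}(K_{n,m})$ is $6$; if $n=m$, it is $4$.
   Context: The local complement $c_v(G)$ complements the edges among the neighbours of $v$. $\mathcal{O}(G)$ is the set of all graphs on the labelled vertex set $V(G)$ obtainable from $G$ by finite sequences of local complements. *)

theory Defs
  imports Main
begin

text \<open>A simple graph on a labelled vertex set V is given by a symmetric,
irreflexive edge relation E contained in V x V.\<close>

definition nbhd :: "('a \<times> 'a) set \<Rightarrow> 'a \<Rightarrow> 'a set" where
  "nbhd E v = {u. (v, u) \<in> E}"

definition local_compl :: "('a \<times> 'a) set \<Rightarrow> 'a \<Rightarrow> ('a \<times> 'a) set" where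
  "local_compl E v =
     {(x, y). ((x, y) \<in> E) \<noteq> (x \<in> nbhd E v \<and> y \<in> nbhd E v \<and> x \<noteq> y)}"

inductive_set lc_orbit :: "'a set \<Rightarrow> ('a \<times> 'a) set \<Rightarrow> ('a \<times> 'a) set set"
  for V :: "'a set" and E0 :: "('a \<times> 'a) set" where
  base: "E0 \<in> lc_orbit V E0"
| step: "E \<in> lc_orbit V E0 \<Longrightarrow> v \<in> V \<Longrightarrow> local_compl E v \<in> lc_orbit V E0"

definition graph_iso :: "'a set \<Rightarrow> ('a \<times> 'a) set \<Rightarrow> ('a \<times> 'a) set \<Rightarrow> bool" where
  "graph_iso V E E' \<longleftrightarrow>
     (\<exists>f. bij_betw f V V \<and> (\<forall>x\<in>V. \<forall>y\<in>V. (x, y) \<in> E \<longleftrightarrow> (f x, f y) \<in> E'))"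

definition num_iso_classes :: "'a set \<Rightarrow> ('a \<times> 'a) set set \<Rightarrow> nat" where
  "num_iso_classes V S = card (S // {(E, E'). E \<in> S \<and> E' \<in> S \<and> graph_iso V E E'})"

definition Kbip_vertices :: "nat \<Rightarrow> nat \<Rightarrow> nat set" where
  "Kbip_vertices n m = {0..<n+m}"

definition Kbip :: "nat \<Rightarrow> nat \<Rightarrow> (nat \<times> nat) set" where
  "Kbip n m = {(i, j). (i < n \<and> n \<le> j \<and> j < n + m) \<or> (j < n \<and> n \<le> i \<and> i < n + m)}"

end

theory Submission
  imports Defs "HOL-Combinatorics.Transposition"
begin

(* Locally complementing the complete bipartite graph K_{A,B} never leaves six families:
   K_{A,B} itself; the complete split graph with clique A (or B) and all edges between the
   sides; a clique on one side plus a vertex a of the other side adjacent to everything, the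
   rest of a's side hanging from a as leaves; and the double stars whose adjacent centres
   a \<in> A, b \<in> B carry the remaining vertices of A and of B as leaves. The numbers of universal
   vertices and of leaves separate these families when |A| \<noteq> |B|, while a permutation
   preserving the sides maps any member of a family to any other. If |A| = |B|, a permutation
   exchanging the sides merges the two complete split classes and the two apex classes,
   leaving four classes instead of six. *)

section \<open>The graphs in the orbit of a complete bipartite graph\<close>

definition clique :: "'a set \<Rightarrow> ('a \<times> 'a) set" where
  "clique S = {(x, y). x \<in> S \<and> y \<in> S \<and> x \<noteq> y}"

definition biclique :: "'a set \<Rightarrow> 'a set \<Rightarrow> ('a \<times> 'a) set" where
  "biclique S T = {(x, y). x \<in> S \<and> y \<in> T \<or> x \<in> T \<and> y \<in> S}"

definition star :: "'a \<Rightarrow> 'a set \<Rightarrow> ('a \<times> 'a) set" where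
  "star c S = {(x, y). x = c \<and> y \<in> S \<and> y \<noteq> c \<or> y = c \<and> x \<in> S \<and> x \<noteq> c}"

definition complete_split :: "'a set \<Rightarrow> 'a set \<Rightarrow> ('a \<times> 'a) set" where
  "complete_split K I = clique K \<union> biclique K I"

definition apex_clique :: "'a \<Rightarrow> 'a set \<Rightarrow> 'a set \<Rightarrow> ('a \<times> 'a) set" where
  "apex_clique a A B = star a (A \<union> B) \<union> clique B"

definition double_star :: "'a \<Rightarrow> 'a set \<Rightarrow> 'a \<Rightarrow> 'a set \<Rightarrow> ('a \<times> 'a) set" where
  "double_star a A b B = star a (insert b A) \<union> star b (insert a B)"

lemmas graph_defs = clique_def biclique_def star_def complete_split_def apex_clique_def double_star_def

lemma biclique_commute: "biclique A B = biclique B A"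
  by (auto simp: biclique_def)

lemma double_star_commute: "double_star a A b B = double_star b B a A"
  by (auto simp: double_star_def)

definition bipartite_lc_orbit :: "'a set \<Rightarrow> 'a set \<Rightarrow> ('a \<times> 'a) set set" where
  "bipartite_lc_orbit A B =
     {biclique A B, complete_split A B, complete_split B A}
     \<union> (\<lambda>a. apex_clique a A B) ` A \<union> (\<lambda>b. apex_clique b B A) ` B
     \<union> (\<lambda>(a, b). double_star a A b B) ` (A \<times> B)"

lemma bipartite_lc_orbit_commute: "bipartite_lc_orbit A B = bipartite_lc_orbit B A"
  by (auto simp: bipartite_lc_orbit_def biclique_commute double_star_commute[of _ A])

lemma bipartite_lc_orbit_cases [consumes 1, case_names biclique complete_split
    complete_split_swapped apex_clique apex_clique_swapped double_star]:
  assumes "E \<in> bipartite_lc_orbit A B"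
  obtains "E = biclique A B" | "E = complete_split A B" | "E = complete_split B A"
    | a where "a \<in> A" "E = apex_clique a A B" | b where "b \<in> B" "E = apex_clique b B A"
    | a b where "a \<in> A" "b \<in> B" "E = double_star a A b B"
  using assms unfolding bipartite_lc_orbit_def by blast

section \<open>Local complementation within the orbit\<close>

lemma local_compl_eq_self:
  assumes "\<And>x y. x \<in> nbhd E v \<Longrightarrow> y \<in> nbhd E v \<Longrightarrow> x = y"
  shows "local_compl E v = E"
  using assms by (auto simp: local_compl_def)

context
  fixes A B :: "'a set"
  assumes disjoint: "A \<inter> B = {}"
begin

lemma nbhd_biclique: "u \<in> A \<Longrightarrow> nbhd (biclique A B) u = B"
  using disjoint by (auto simp: graph_defs nbhd_def)

lemma nbhd_complete_split_clique: "u \<in> A \<Longrightarrow> nbhd (complete_split A B) u = A \<union> B - {u}"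
  using disjoint by (auto simp: graph_defs nbhd_def)

lemma nbhd_complete_split_indep: "u \<in> B \<Longrightarrow> nbhd (complete_split A B) u = A"
  using disjoint by (auto simp: graph_defs nbhd_def)

lemma nbhd_apex_clique_apex: "a \<in> A \<Longrightarrow> nbhd (apex_clique a A B) a = A \<union> B - {a}"
  by (auto simp: graph_defs nbhd_def)

lemma nbhd_apex_clique_leaf:
  "a \<in> A \<Longrightarrow> u \<in> A \<Longrightarrow> u \<noteq> a \<Longrightarrow> nbhd (apex_clique a A B) u = {a}"
  using disjoint by (auto simp: graph_defs nbhd_def)

lemma nbhd_apex_clique_clique:
  "a \<in> A \<Longrightarrow> u \<in> B \<Longrightarrow> nbhd (apex_clique a A B) u = insert a (B - {u})"
  using disjoint by (auto simp: graph_defs nbhd_def)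

lemma nbhd_double_star_centre:
  "a \<in> A \<Longrightarrow> b \<in> B \<Longrightarrow> nbhd (double_star a A b B) a = insert b (A - {a})"
  using disjoint by (auto simp: graph_defs nbhd_def)

lemma nbhd_double_star_leaf:
  "a \<in> A \<Longrightarrow> b \<in> B \<Longrightarrow> u \<in> A \<Longrightarrow> u \<noteq> a \<Longrightarrow> nbhd (double_star a A b B) u = {a}"
  using disjoint by (auto simp: graph_defs nbhd_def)

lemma local_compl_biclique: "v \<in> A \<Longrightarrow> local_compl (biclique A B) v = complete_split B A"
  using disjoint by (simp add: local_compl_def nbhd_biclique) (auto simp: graph_defs)

lemma local_compl_complete_split_clique:
  "v \<in> A \<Longrightarrow> local_compl (complete_split A B) v = apex_clique v A B"
  using disjoint by (simp add: local_compl_def nbhd_complete_split_clique) (auto simp: graph_defs)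

lemma local_compl_complete_split_indep:
  "v \<in> B \<Longrightarrow> local_compl (complete_split A B) v = biclique A B"
  using disjoint by (simp add: local_compl_def nbhd_complete_split_indep) (auto simp: graph_defs)

lemma local_compl_apex_clique_apex:
  "a \<in> A \<Longrightarrow> local_compl (apex_clique a A B) a = complete_split A B"
  using disjoint by (simp add: local_compl_def nbhd_apex_clique_apex) (auto simp: graph_defs)

lemma local_compl_apex_clique_leaf:
  "a \<in> A \<Longrightarrow> v \<in> A \<Longrightarrow> v \<noteq> a \<Longrightarrow> local_compl (apex_clique a A B) v = apex_clique a A B"
  by (rule local_compl_eq_self) (simp add: nbhd_apex_clique_leaf)

lemma local_compl_apex_clique_clique:
  "a \<in> A \<Longrightarrow> b \<in> B \<Longrightarrow> local_compl (apex_clique a A B) b = double_star a A b B"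
  using disjoint by (simp add: local_compl_def nbhd_apex_clique_clique) (auto simp: graph_defs)

lemma local_compl_double_star_centre:
  "a \<in> A \<Longrightarrow> b \<in> B \<Longrightarrow> local_compl (double_star a A b B) a = apex_clique b B A"
  using disjoint by (simp add: local_compl_def nbhd_double_star_centre) (auto simp: graph_defs)

lemma local_compl_double_star_leaf:
  "a \<in> A \<Longrightarrow> b \<in> B \<Longrightarrow> v \<in> A \<Longrightarrow> v \<noteq> a \<Longrightarrow> local_compl (double_star a A b B) v = double_star a A b B"
  by (rule local_compl_eq_self) (simp add: nbhd_double_star_leaf)

end

lemma local_compl_in_bipartite_lc_orbit_left:
  assumes disjoint: "A \<inter> B = {}" and "E \<in> bipartite_lc_orbit A B" and v: "v \<in> A"
  shows "local_compl E v \<in> bipartite_lc_orbit A B"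
  using assms(2)
proof (cases rule: bipartite_lc_orbit_cases)
  case biclique
  then show ?thesis using v disjoint by (simp add: local_compl_biclique bipartite_lc_orbit_def)
next
  case complete_split
  then show ?thesis
    using v disjoint by (simp add: local_compl_complete_split_clique bipartite_lc_orbit_def)
next
  case complete_split_swapped
  then show ?thesis using v disjoint local_compl_complete_split_indep[of B A]
    by (simp add: Int_commute biclique_commute bipartite_lc_orbit_def)
next
  case (apex_clique a)
  then show ?thesis using v disjoint
    by (cases "v = a")
      (simp_all add: local_compl_apex_clique_apex local_compl_apex_clique_leaf bipartite_lc_orbit_def)
next
  case (apex_clique_swapped b)
  then show ?thesis using v disjoint local_compl_apex_clique_clique[of B A b v]
    by (auto simp: Int_commute double_star_commute[of b] bipartite_lc_orbit_def)
next
  case (double_star a b)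
  then show ?thesis using v disjoint
    by (cases "v = a")
      (auto simp: local_compl_double_star_centre local_compl_double_star_leaf bipartite_lc_orbit_def)
qed

lemma local_compl_in_bipartite_lc_orbit:
  assumes "A \<inter> B = {}" "E \<in> bipartite_lc_orbit A B" "v \<in> A \<union> B"
  shows "local_compl E v \<in> bipartite_lc_orbit A B"
  using assms local_compl_in_bipartite_lc_orbit_left[of A B E v]
    local_compl_in_bipartite_lc_orbit_left[of B A E v]
  by (auto simp: bipartite_lc_orbit_commute[of B] Int_commute)

lemma lc_orbit_biclique:
  assumes disjoint: "A \<inter> B = {}" and "A \<noteq> {}" "B \<noteq> {}"
  shows "lc_orbit (A \<union> B) (biclique A B) = bipartite_lc_orbit A B"
proof
  show "lc_orbit (A \<union> B) (biclique A B) \<subseteq> bipartite_lc_orbit A B"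
  proof
    fix E assume "E \<in> lc_orbit (A \<union> B) (biclique A B)"
    then show "E \<in> bipartite_lc_orbit A B"
    proof induction
      case base
      then show ?case by (simp add: bipartite_lc_orbit_def)
    next
      case (step E v)
      show ?case by (rule local_compl_in_bipartite_lc_orbit[OF disjoint step.IH step.hyps(2)])
    qed
  qed
next
  let ?O = "lc_orbit (A \<union> B) (biclique A B)"
  obtain a b where "a \<in> A" "b \<in> B" using assms by blast
  have disjoint': "B \<inter> A = {}" using disjoint by blast
  have base: "biclique A B \<in> ?O" by (rule lc_orbit.base)
  have split_B: "complete_split B A \<in> ?O"
    using lc_orbit.step[OF base, of a] \<open>a \<in> A\<close> disjoint by (simp add: local_compl_biclique)
  have split_A: "complete_split A B \<in> ?O"
    using lc_orbit.step[OF base, of b] \<open>b \<in> B\<close> local_compl_biclique[OF disjoint', of b]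
    by (simp add: biclique_commute[of B])
  have apex_A: "apex_clique a' A B \<in> ?O" if "a' \<in> A" for a'
    using lc_orbit.step[OF split_A, of a'] that disjoint by (simp add: local_compl_complete_split_clique)
  have apex_B: "apex_clique b' B A \<in> ?O" if "b' \<in> B" for b'
    using lc_orbit.step[OF split_B, of b'] that disjoint' by (simp add: local_compl_complete_split_clique)
  have double_stars: "double_star a' A b' B \<in> ?O" if "a' \<in> A" "b' \<in> B" for a' b'
    using lc_orbit.step[OF apex_A[OF that(1)], of b'] that disjoint
    by (simp add: local_compl_apex_clique_clique)
  show "bipartite_lc_orbit A B \<subseteq> ?O"
    unfolding bipartite_lc_orbit_def using base split_A split_B apex_A apex_B double_stars by auto
qed

section \<open>Degree counts are isomorphism invariants\<close>

definition degree :: "'a set \<Rightarrow> ('a \<times> 'a) set \<Rightarrow> 'a \<Rightarrow> nat" where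
  "degree V E u = card (nbhd E u \<inter> V)"

definition degree_count :: "'a set \<Rightarrow> ('a \<times> 'a) set \<Rightarrow> nat \<Rightarrow> nat" where
  "degree_count V E d = card {u \<in> V. degree V E u = d}"

(* For a loopless graph on a finite V: the numbers of universal vertices and of leaves. *)
definition univ_leaf_counts :: "'a set \<Rightarrow> ('a \<times> 'a) set \<Rightarrow> nat \<times> nat" where
  "univ_leaf_counts V E = (degree_count V E (card V - 1), degree_count V E 1)"

lemma degree_eq_card_nbhd: "nbhd E u \<subseteq> V \<Longrightarrow> degree V E u = card (nbhd E u)"
  by (simp add: degree_def Int_absorb2)

lemma degree_count_eq_0:
  assumes "\<And>u. u \<in> V \<Longrightarrow> degree V E u \<noteq> d"
  shows "degree_count V E d = 0"
proof -
  have "{u \<in> V. degree V E u = d} = {}" using assms by blast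
  then show ?thesis unfolding degree_count_def by (metis card.empty)
qed

lemma degree_count_eqI:
  assumes "S \<subseteq> V" "\<And>u. u \<in> V \<Longrightarrow> degree V E u = d \<longleftrightarrow> u \<in> S"
  shows "degree_count V E d = card S"
  unfolding degree_count_def using assms by (intro arg_cong[where f = card]) blast

lemma bij_betw_Collect_eq_image:
  assumes "bij_betw f V V" "\<And>u. u \<in> V \<Longrightarrow> Q (f u) \<longleftrightarrow> P u"
  shows "{u \<in> V. Q u} = f ` {u \<in> V. P u}"
proof -
  have "{u \<in> V. Q u} = {u \<in> f ` V. Q u}"
    using bij_betw_imp_surj_on[OF assms(1)] by simp
  also have "\<dots> = f ` {u \<in> V. Q (f u)}"
    by blast
  also have "\<dots> = f ` {u \<in> V. P u}"
    using assms(2) by (intro arg_cong[where f = "image f"]) blast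
  finally show ?thesis .
qed

context
  fixes V :: "'a set" and E E' :: "('a \<times> 'a) set" and f :: "'a \<Rightarrow> 'a"
  assumes bij: "bij_betw f V V"
    and adj: "\<And>x y. x \<in> V \<Longrightarrow> y \<in> V \<Longrightarrow> (x, y) \<in> E \<longleftrightarrow> (f x, f y) \<in> E'"
begin

lemma nbhd_iso: "u \<in> V \<Longrightarrow> nbhd E' (f u) \<inter> V = f ` (nbhd E u \<inter> V)"
  using bij_betw_Collect_eq_image[OF bij, of "\<lambda>y. (f u, y) \<in> E'" "\<lambda>y. (u, y) \<in> E"] adj
  by (simp add: nbhd_def Int_def conj_commute)

lemma degree_iso: "degree V E' (f u) = degree V E u" if "u \<in> V"
proof -
  have "inj_on f (nbhd E u \<inter> V)"
    using bij_betw_imp_inj_on[OF bij] by (rule inj_on_subset) blast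
  then show ?thesis using that by (simp add: degree_def nbhd_iso card_image)
qed

lemma degree_count_iso: "degree_count V E' d = degree_count V E d"
proof -
  have "{u \<in> V. degree V E' u = d} = f ` {u \<in> V. degree V E u = d}"
    by (rule bij_betw_Collect_eq_image[OF bij]) (simp add: degree_iso)
  moreover have "inj_on f {u \<in> V. degree V E u = d}"
    using bij_betw_imp_inj_on[OF bij] by (rule inj_on_subset) blast
  ultimately show ?thesis by (simp add: degree_count_def card_image)
qed

end

lemma univ_leaf_counts_graph_iso:
  assumes "graph_iso V E E'"
  shows "univ_leaf_counts V E' = univ_leaf_counts V E"
proof -
  obtain f where "bij_betw f V V" "\<forall>x\<in>V. \<forall>y\<in>V. (x, y) \<in> E \<longleftrightarrow> (f x, f y) \<in> E'"
    using assms unfolding graph_iso_def by blast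
  then show ?thesis by (simp add: univ_leaf_counts_def degree_count_iso)
qed

section \<open>Isomorphisms induced by permutations\<close>

lemma graph_iso_refl: "graph_iso V E E"
  unfolding graph_iso_def by (intro exI[of _ id]) simp

lemma graph_iso_by_perm:
  assumes "bij f" "f ` V = V" "\<And>x y. (f x, f y) \<in> E' \<longleftrightarrow> (x, y) \<in> E"
  shows "graph_iso V E E'"
  unfolding graph_iso_def bij_betw_def
  using assms by (metis bij_is_inj inj_on_subset subset_UNIV)

context
  fixes f :: "'a \<Rightarrow> 'a"
  assumes inj: "inj f"
begin

lemma complete_split_perm:
  "(f x, f y) \<in> complete_split (f ` K) (f ` I) \<longleftrightarrow> (x, y) \<in> complete_split K I"
  using inj by (auto simp: graph_defs inj_image_mem_iff inj_eq)

lemma apex_clique_perm: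
  "(f x, f y) \<in> apex_clique (f a) (f ` A) (f ` B) \<longleftrightarrow> (x, y) \<in> apex_clique a A B"
  using inj by (auto simp: graph_defs inj_image_mem_iff inj_eq)

lemma double_star_perm:
  "(f x, f y) \<in> double_star (f a) (f ` A) (f b) (f ` B) \<longleftrightarrow> (x, y) \<in> double_star a A b B"
  using inj by (auto simp: graph_defs inj_image_mem_iff inj_eq)

end

lemma num_iso_classes_eq_card_image:
  assumes "\<And>E E'. E \<in> S \<Longrightarrow> E' \<in> S \<Longrightarrow> graph_iso V E E' \<longleftrightarrow> t E = t E'"
  shows "num_iso_classes V S = card (t ` S)"
proof -
  let ?R = "{(E, E'). E \<in> S \<and> E' \<in> S \<and> graph_iso V E E'}"
  let ?fibre = "\<lambda>c. {E \<in> S. t E = c}"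
  have "?R `` {E} = ?fibre (t E)" if "E \<in> S" for E
    using assms that by auto
  then have "S // ?R = ?fibre ` (t ` S)"
    unfolding quotient_def by (auto simp: image_image)
  moreover have "inj_on ?fibre (t ` S)"
    by (rule inj_onI) blast
  ultimately show ?thesis
    by (simp add: num_iso_classes_def card_image)
qed

section \<open>Counting the isomorphism classes\<close>

locale bipartition =
  fixes A B :: "'a set"
  assumes disjoint: "A \<inter> B = {}" and two_le_card_A: "2 \<le> card A" and two_le_card_B: "2 \<le> card B"
begin

lemma swap: "bipartition B A"
  using disjoint two_le_card_A two_le_card_B by unfold_locales auto

lemma finite_A: "finite A" and finite_B: "finite B"
  using two_le_card_A two_le_card_B by (auto intro: card_ge_0_finite)

lemma A_nonempty: "A \<noteq> {}" and B_nonempty: "B \<noteq> {}"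
  using two_le_card_A two_le_card_B by auto

lemma A_not_in_B: "x \<in> A \<Longrightarrow> x \<notin> B" and B_not_in_A: "x \<in> B \<Longrightarrow> x \<notin> A"
  using disjoint by blast+

lemma card_Un: "card (A \<union> B) = card A + card B"
  using finite_A finite_B disjoint by (rule card_Un_disjoint)

lemma degree_biclique_left: "u \<in> A \<Longrightarrow> degree (A \<union> B) (biclique A B) u = card B"
  using disjoint by (simp add: degree_def nbhd_biclique Int_absorb1)

lemma degree_biclique_right: "u \<in> B \<Longrightarrow> degree (A \<union> B) (biclique A B) u = card A"
  using bipartition.degree_biclique_left[OF swap] by (simp add: Un_commute biclique_commute)

lemma degree_complete_split_left:
  "u \<in> A \<Longrightarrow> degree (A \<union> B) (complete_split A B) u = card A + card B - 1"
  using disjoint finite_A finite_B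
  by (simp add: degree_def nbhd_complete_split_clique Int_absorb2 card_Diff_singleton card_Un)

lemma degree_complete_split_right: "u \<in> B \<Longrightarrow> degree (A \<union> B) (complete_split A B) u = card A"
  using disjoint by (simp add: degree_def nbhd_complete_split_indep Int_absorb1)

lemma degree_apex_clique_left:
  "a \<in> A \<Longrightarrow> u \<in> A \<Longrightarrow>
    degree (A \<union> B) (apex_clique a A B) u = (if u = a then card A + card B - 1 else 1)"
  using disjoint finite_A finite_B
  by (simp add: degree_def nbhd_apex_clique_apex nbhd_apex_clique_leaf Int_absorb2
      card_Diff_singleton card_Un)

lemma degree_apex_clique_right:
  "a \<in> A \<Longrightarrow> u \<in> B \<Longrightarrow> degree (A \<union> B) (apex_clique a A B) u = card B"
  using disjoint finite_B two_le_card_B A_not_in_B[of a]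
  by (subst degree_eq_card_nbhd) (auto simp: nbhd_apex_clique_clique card_Diff_singleton)

lemma degree_double_star_left:
  assumes "a \<in> A" "b \<in> B" "u \<in> A"
  shows "degree (A \<union> B) (double_star a A b B) u = (if u = a then card A else 1)"
proof (cases "u = a")
  case True
  have "degree (A \<union> B) (double_star a A b B) a = card (insert b (A - {a}))"
    using assms disjoint by (subst degree_eq_card_nbhd) (auto simp: nbhd_double_star_centre)
  with True show ?thesis
    using assms B_not_in_A finite_A two_le_card_A by (simp add: card_Diff_singleton)
next
  case False
  with assms show ?thesis
    using disjoint by (simp add: degree_def nbhd_double_star_leaf)
qed

lemma degree_double_star_right:
  "a \<in> A \<Longrightarrow> b \<in> B \<Longrightarrow> u \<in> B \<Longrightarrow>
    degree (A \<union> B) (double_star a A b B) u = (if u = b then card B else 1)"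
  using bipartition.degree_double_star_left[OF swap] by (simp add: Un_commute double_star_commute[of a])

lemma univ_leaf_counts_biclique: "univ_leaf_counts (A \<union> B) (biclique A B) = (0, 0)"
proof -
  have "degree_count (A \<union> B) (biclique A B) d = 0" if "d \<noteq> card A" "d \<noteq> card B" for d
    using that by (intro degree_count_eq_0) (auto simp: degree_biclique_left degree_biclique_right)
  then show ?thesis
    using two_le_card_A two_le_card_B by (simp add: univ_leaf_counts_def card_Un)
qed

lemma univ_leaf_counts_complete_split: "univ_leaf_counts (A \<union> B) (complete_split A B) = (card A, 0)"
proof -
  have "degree_count (A \<union> B) (complete_split A B) (card A + card B - 1) = card A"
    using two_le_card_B
    by (intro degree_count_eqI) (auto simp: degree_complete_split_left degree_complete_split_right)
  moreover have "degree_count (A \<union> B) (complete_split A B) 1 = 0"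
    using two_le_card_A two_le_card_B
    by (intro degree_count_eq_0) (auto simp: degree_complete_split_left degree_complete_split_right)
  ultimately show ?thesis by (simp add: univ_leaf_counts_def card_Un)
qed

lemma univ_leaf_counts_apex_clique:
  assumes "a \<in> A"
  shows "univ_leaf_counts (A \<union> B) (apex_clique a A B) = (1, card A - 1)"
proof -
  have "degree_count (A \<union> B) (apex_clique a A B) (card A + card B - 1) = card {a}"
    using assms two_le_card_A two_le_card_B
    by (intro degree_count_eqI)
      (auto simp: degree_apex_clique_left degree_apex_clique_right split: if_splits)
  moreover have "degree_count (A \<union> B) (apex_clique a A B) 1 = card (A - {a})"
    using assms two_le_card_A two_le_card_B
    by (intro degree_count_eqI)
      (auto simp: degree_apex_clique_left degree_apex_clique_right split: if_splits)
  ultimately show ?thesis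
    using assms finite_A by (simp add: univ_leaf_counts_def card_Un)
qed

lemma univ_leaf_counts_double_star:
  assumes "a \<in> A" "b \<in> B"
  shows "univ_leaf_counts (A \<union> B) (double_star a A b B) = (0, card A + card B - 2)"
proof -
  have "degree_count (A \<union> B) (double_star a A b B) (card A + card B - 1) = 0"
    using assms two_le_card_A two_le_card_B
    by (intro degree_count_eq_0)
      (auto simp: degree_double_star_left degree_double_star_right split: if_splits)
  moreover have "degree_count (A \<union> B) (double_star a A b B) 1 = card (A \<union> B - {a, b})"
    using assms disjoint two_le_card_A two_le_card_B
    by (intro degree_count_eqI)
      (auto simp: degree_double_star_left degree_double_star_right split: if_splits)
  moreover have "a \<noteq> b"
    using assms A_not_in_B by blast
  then have "card (A \<union> B - {a, b}) = card A + card B - 2"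
    using assms finite_A finite_B by (simp add: card_Diff_subset card_Un)
  ultimately show ?thesis by (simp add: univ_leaf_counts_def card_Un)
qed

lemma univ_leaf_counts_complete_split_swapped:
  "univ_leaf_counts (A \<union> B) (complete_split B A) = (card B, 0)"
  using bipartition.univ_leaf_counts_complete_split[OF swap] by (simp add: Un_commute)

lemma univ_leaf_counts_apex_clique_swapped:
  "b \<in> B \<Longrightarrow> univ_leaf_counts (A \<union> B) (apex_clique b B A) = (1, card B - 1)"
  using bipartition.univ_leaf_counts_apex_clique[OF swap] by (simp add: Un_commute)

lemma ex_perm_fixing_parts:
  assumes "a \<in> A" "a' \<in> A" "b \<in> B" "b' \<in> B"
  obtains f where "bij f" "f ` A = A" "f ` B = B" "f a = a'" "f b = b'"
proof
  let ?f = "transpose a a' \<circ> transpose b b'"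
  show "bij ?f" by (simp add: bij_comp)
  show "?f ` A = A" "?f ` B = B"
    unfolding image_comp[symmetric] using assms A_not_in_B B_not_in_A by simp_all
  show "?f a = a'" "?f b = b'"
    using assms A_not_in_B B_not_in_A by (auto simp: transpose_def)
qed

lemma ex_perm_swapping_parts:
  assumes "card A = card B" "a \<in> A" "b \<in> B"
  obtains f where "bij f" "f ` A = B" "f ` B = A" "f a = b"
proof -
  obtain g where g: "bij_betw g A B"
    using finite_same_card_bij[OF finite_A finite_B assms(1)] by blast
  define h where "h x = (if x \<in> A then g x else if x \<in> B then inv_into A g x else x)" for x
  have hA: "h x = g x" "g x \<in> B" if "x \<in> A" for x
    using that bij_betw_apply[OF g] by (simp_all add: h_def)
  have hB: "h x = inv_into A g x" "inv_into A g x \<in> A" if "x \<in> B" for x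
    using that B_not_in_A bij_betw_apply[OF bij_betw_inv_into[OF g]] by (simp_all add: h_def)
  have h_other: "h x = x" if "x \<notin> A" "x \<notin> B" for x
    using that by (simp add: h_def)
  have "h (h x) = x" for x
  proof -
    consider "x \<in> A" | "x \<in> B" | "x \<notin> A" "x \<notin> B" by blast
    then show ?thesis
      by cases (simp_all add: hA hB h_other bij_betw_inv_into_left[OF g] bij_betw_inv_into_right[OF g])
  qed
  then have "bij h" by (rule involuntory_imp_bij)
  have "h ` A = B" "h ` B = A"
    using hA hB bij_betw_imp_surj_on[OF g] bij_betw_imp_surj_on[OF bij_betw_inv_into[OF g]]
    by (simp_all cong: image_cong)
  show thesis
  proof
    let ?f = "transpose (h a) b \<circ> h"
    show "bij ?f" using \<open>bij h\<close> by (simp add: bij_comp)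
    have "h a \<in> B" using \<open>h ` A = B\<close> assms(2) by blast
    then show "?f ` A = B" "?f ` B = A"
      unfolding image_comp[symmetric] using \<open>h ` A = B\<close> \<open>h ` B = A\<close> assms(3) B_not_in_A
      by simp_all
    show "?f a = b" by simp
  qed
qed

lemma graph_iso_apex_clique:
  assumes "a \<in> A" "a' \<in> A"
  shows "graph_iso (A \<union> B) (apex_clique a A B) (apex_clique a' A B)"
proof (rule graph_iso_by_perm)
  show "bij (transpose a a')" by simp
  show "transpose a a' ` (A \<union> B) = A \<union> B" using assms by simp
  fix x y
  show "(transpose a a' x, transpose a a' y) \<in> apex_clique a' A B \<longleftrightarrow> (x, y) \<in> apex_clique a A B"
    using apex_clique_perm[OF inj_transpose, of a a' x y a A B] assms A_not_in_B by simp
qed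

lemma graph_iso_apex_clique_swapped:
  "b \<in> B \<Longrightarrow> b' \<in> B \<Longrightarrow> graph_iso (A \<union> B) (apex_clique b B A) (apex_clique b' B A)"
  using bipartition.graph_iso_apex_clique[OF swap] by (simp add: Un_commute)

lemma graph_iso_double_star:
  assumes "a \<in> A" "a' \<in> A" "b \<in> B" "b' \<in> B"
  shows "graph_iso (A \<union> B) (double_star a A b B) (double_star a' A b' B)"
proof -
  obtain f where f: "bij f" "f ` A = A" "f ` B = B" "f a = a'" "f b = b'"
    using ex_perm_fixing_parts[OF assms] .
  show ?thesis
    using f double_star_perm[OF bij_is_inj[OF f(1)], of _ _ a A b B]
    by (intro graph_iso_by_perm[OF f(1)]) (simp_all add: image_Un)
qed

lemma graph_iso_complete_split_swap:
  assumes "card A = card B"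
  shows "graph_iso (A \<union> B) (complete_split A B) (complete_split B A)"
proof -
  obtain a b where "a \<in> A" "b \<in> B" using A_nonempty B_nonempty by blast
  then obtain f where f: "bij f" "f ` A = B" "f ` B = A"
    using ex_perm_swapping_parts[OF assms] by metis
  show ?thesis
    using f complete_split_perm[OF bij_is_inj[OF f(1)], of _ _ A B]
    by (intro graph_iso_by_perm[OF f(1)]) (simp_all add: image_Un Un_commute)
qed

lemma graph_iso_complete_split_swap':
  "card A = card B \<Longrightarrow> graph_iso (A \<union> B) (complete_split B A) (complete_split A B)"
  using bipartition.graph_iso_complete_split_swap[OF swap] by (simp add: Un_commute)

lemma graph_iso_apex_clique_swap:
  assumes "card A = card B" "a \<in> A" "b \<in> B"
  shows "graph_iso (A \<union> B) (apex_clique a A B) (apex_clique b B A)"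
proof -
  obtain f where f: "bij f" "f ` A = B" "f ` B = A" "f a = b"
    using ex_perm_swapping_parts[OF assms] .
  show ?thesis
    using f apex_clique_perm[OF bij_is_inj[OF f(1)], of _ _ a A B]
    by (intro graph_iso_by_perm[OF f(1)]) (simp_all add: image_Un Un_commute)
qed

lemma graph_iso_apex_clique_swap':
  "card A = card B \<Longrightarrow> a \<in> A \<Longrightarrow> b \<in> B \<Longrightarrow> graph_iso (A \<union> B) (apex_clique b B A) (apex_clique a A B)"
  using bipartition.graph_iso_apex_clique_swap[OF swap] by (simp add: Un_commute)

lemma graph_iso_iff_univ_leaf_counts:
  assumes "E \<in> bipartite_lc_orbit A B" "E' \<in> bipartite_lc_orbit A B"
  shows "graph_iso (A \<union> B) E E' \<longleftrightarrow> univ_leaf_counts (A \<union> B) E = univ_leaf_counts (A \<union> B) E'"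
proof
  assume "graph_iso (A \<union> B) E E'"
  then show "univ_leaf_counts (A \<union> B) E = univ_leaf_counts (A \<union> B) E'"
    by (rule univ_leaf_counts_graph_iso[symmetric])
next
  assume "univ_leaf_counts (A \<union> B) E = univ_leaf_counts (A \<union> B) E'"
  with assms two_le_card_A two_le_card_B show "graph_iso (A \<union> B) E E'"
    by (elim bipartite_lc_orbit_cases)
      (auto simp: univ_leaf_counts_biclique univ_leaf_counts_complete_split
        univ_leaf_counts_complete_split_swapped univ_leaf_counts_apex_clique
        univ_leaf_counts_apex_clique_swapped univ_leaf_counts_double_star
        intro: graph_iso_refl graph_iso_apex_clique graph_iso_apex_clique_swapped
        graph_iso_double_star graph_iso_complete_split_swap graph_iso_complete_split_swap'
        graph_iso_apex_clique_swap graph_iso_apex_clique_swap')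
qed

lemma univ_leaf_counts_image:
  "univ_leaf_counts (A \<union> B) ` bipartite_lc_orbit A B =
    {(0, 0), (card A, 0), (card B, 0), (1, card A - 1), (1, card B - 1), (0, card A + card B - 2)}"
proof -
  obtain a b where ab: "a \<in> A" "b \<in> B" using A_nonempty B_nonempty by blast
  have "univ_leaf_counts (A \<union> B) ` bipartite_lc_orbit A B =
      univ_leaf_counts (A \<union> B) ` {biclique A B, complete_split A B, complete_split B A}
      \<union> univ_leaf_counts (A \<union> B) ` (\<lambda>a. apex_clique a A B) ` A
      \<union> univ_leaf_counts (A \<union> B) ` (\<lambda>b. apex_clique b B A) ` B
      \<union> univ_leaf_counts (A \<union> B) ` (\<lambda>(a, b). double_star a A b B) ` (A \<times> B)"
    unfolding bipartite_lc_orbit_def by (simp only: image_Un)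
  moreover have "univ_leaf_counts (A \<union> B) ` (\<lambda>a. apex_clique a A B) ` A = {(1, card A - 1)}"
    using ab by (force simp: univ_leaf_counts_apex_clique)
  moreover have "univ_leaf_counts (A \<union> B) ` (\<lambda>b. apex_clique b B A) ` B = {(1, card B - 1)}"
    using ab by (force simp: univ_leaf_counts_apex_clique_swapped)
  moreover have "univ_leaf_counts (A \<union> B) ` (\<lambda>(a, b). double_star a A b B) ` (A \<times> B)
      = {(0, card A + card B - 2)}"
    using ab by (force simp: univ_leaf_counts_double_star)
  ultimately show ?thesis
    by (simp add: univ_leaf_counts_biclique univ_leaf_counts_complete_split
        univ_leaf_counts_complete_split_swapped insert_commute)
qed

lemma num_iso_classes_lc_orbit_biclique:
  "num_iso_classes (A \<union> B) (lc_orbit (A \<union> B) (biclique A B)) = (if card A \<noteq> card B then 6 else 4)"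
proof -
  have "num_iso_classes (A \<union> B) (lc_orbit (A \<union> B) (biclique A B))
      = card (univ_leaf_counts (A \<union> B) ` bipartite_lc_orbit A B)"
    unfolding lc_orbit_biclique[OF disjoint A_nonempty B_nonempty]
    by (rule num_iso_classes_eq_card_image) (rule graph_iso_iff_univ_leaf_counts)
  then show ?thesis
    using two_le_card_A two_le_card_B by (auto simp: univ_leaf_counts_image)
qed

end

theorem theorem6:
  fixes n m :: nat
  assumes "n \<ge> 2" and "m \<ge> 2"
  shows "num_iso_classes (Kbip_vertices n m) (lc_orbit (Kbip_vertices n m) (Kbip n m))
           = (if n \<noteq> m then 6 else 4)"
proof -
  interpret bipartition "{0..<n}" "{n..<n + m}"
    using assms by unfold_locales auto
  have "Kbip_vertices n m = {0..<n} \<union> {n..<n + m}" "Kbip n m = biclique {0..<n} {n..<n + m}"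
    by (auto simp: Kbip_vertices_def Kbip_def biclique_def)
  then show ?thesis
    using num_iso_classes_lc_orbit_biclique by simp
qed

end
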